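(* Let $I\subset\mathbb{R}$ be an open interval, $n\in\mathbb{N}$, $x\in C^{n+1}(I)$, $\kappa,\mu\in\,]-1,+\infty[$, $t_0\in I$ and $T>0$. Set $C_{\beta T}^{\mu,\kappa}=\beta T\,\frac{\kappa+n+1}{\mu+\kappa+2n+2}$ for $\beta\in\{-1,1\}$, and $$I_{n+1}^+=\inf_{t_0<\theta<t_0+T}x^{(n+1)}(\theta),\quad S_{n+1}^+=\sup_{t_0<\theta<t_0+T}x^{(n+1)}(\theta),$$ $$I_{n+1}^-=\inf_{t_0-T<\theta<t_0}x^{(n+1)}(\theta),\quad S_{n+1}^-=\sup_{t_0-T<\theta<t_0}x^{(n+1)}(\theta).$$ If $t_0+T\in I$, then $C_T^{\mu,\kappa}I_{n+1}^+\le e_{R_n,T}^{\mu,\kappa}(t_0)\le C_T^{\mu,\kappa}S_{n+1}^+$; if $t_0-T\in I$, then $C_{-T}^{\mu,\kappa}S_{n+1}^-\le e_{R_n,-T}^{\mu,\kappa}(t_0)\le C_{-T}^{\mu,\kappa}I_{n+1}^-$.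
   Context: For $a,b>-1$ let $w^{a,b}(t)=t^{b}(1-t)^{a}$ on $(0,1)$ and $P_k^{a,b}(t)=\sum_{s=0}^{k}\binom{k+a}{s}\binom{k+b}{k-s}(t-1)^{k-s}t^{s}$ (Jacobi polynomial on $[0,1]$); $B(\cdot,\cdot)$ is the Beta function. For $\beta\in\{-1,1\}$ with $t_0+\beta T\in I$, the minimal Jacobi estimator of $x^{(n)}(t_0)$ applied to the noise-free signal $x$ is $$\hat D_{\beta T}^{\mu,\kappa}x^{(n)}(t_0)=\frac{n!}{(\beta T)^{n}B(\kappa+n+1,\mu+n+1)}\int_0^1 w^{\mu,\kappa}(\tau)P_n^{\mu,\kappa}(\tau)\,x(t_0+\beta T\tau)\,d\tau,$$ and its bias term error is $e_{R_n,\beta T}^{\mu,\kappa}(t_0)=\hat D_{\beta T}^{\mu,\kappa}x^{(n)}(t_0)-x^{(n)}(t_0)$. *)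

theory Defs
  imports "HOL-Analysis.Analysis"
begin

definition Ck_on :: "nat \<Rightarrow> real set \<Rightarrow> (real \<Rightarrow> real) \<Rightarrow> bool" where
  "Ck_on k I f \<longleftrightarrow>
     (\<forall>j<k. \<forall>t\<in>I. ((deriv ^^ j) f has_real_derivative (deriv ^^ Suc j) f t) (at t))
     \<and> continuous_on I ((deriv ^^ k) f)"

definition jacobi_weight :: "real \<Rightarrow> real \<Rightarrow> real \<Rightarrow> real" where
  "jacobi_weight a b t = t powr b * (1 - t) powr a"

definition jacobi_poly :: "nat \<Rightarrow> real \<Rightarrow> real \<Rightarrow> real \<Rightarrow> real" where
  "jacobi_poly k a b t =
     (\<Sum>s=0..k. ((real k + a) gchoose s) * ((real k + b) gchoose (k - s))
                 * (t - 1) ^ (k - s) * t ^ s)"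

definition jacobi_estimator ::
    "nat \<Rightarrow> real \<Rightarrow> real \<Rightarrow> real \<Rightarrow> (real \<Rightarrow> real) \<Rightarrow> real \<Rightarrow> real" where
  "jacobi_estimator n \<mu> \<kappa> h x t0 =
     fact n / (h ^ n * Beta (\<kappa> + real n + 1) (\<mu> + real n + 1))
     * integral {0..1} (\<lambda>\<tau>. jacobi_weight \<mu> \<kappa> \<tau> * jacobi_poly n \<mu> \<kappa> \<tau> * x (t0 + h * \<tau>))"

definition jacobi_bias_error ::
    "nat \<Rightarrow> real \<Rightarrow> real \<Rightarrow> real \<Rightarrow> (real \<Rightarrow> real) \<Rightarrow> real \<Rightarrow> real" where
  "jacobi_bias_error n \<mu> \<kappa> h x t0 = jacobi_estimator n \<mu> \<kappa> h x t0 - (deriv ^^ n) x t0"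

definition jacobi_C :: "nat \<Rightarrow> real \<Rightarrow> real \<Rightarrow> real \<Rightarrow> real" where
  "jacobi_C n \<mu> \<kappa> h = h * (\<kappa> + real n + 1) / (\<mu> + \<kappa> + 2 * real n + 2)"

end

theory Submission
  imports Defs
begin

text \<open>By Rodrigues' formula, \<open>w\<^sup>\<mu>\<^sup>,\<^sup>\<kappa> P\<^sub>n\<close> is \<open>(-1)\<^sup>n/n!\<close> times the \<open>n\<close>-th
  derivative of the Beta kernel \<open>\<tau>\<^sup>\<kappa>\<^sup>+\<^sup>n (1-\<tau>)\<^sup>\<mu>\<^sup>+\<^sup>n\<close>, whose lower derivatives vanish at
  \<open>0\<close> and \<open>1\<close>. Integrating by parts \<open>n\<close> times, the estimator becomes the mean of
  \<open>x\<^sup>(\<^sup>n\<^sup>)(t\<^sub>0 + \<beta>T\<tau>)\<close> against this kernel, and the bias the mean of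
  \<open>x\<^sup>(\<^sup>n\<^sup>)(t\<^sub>0 + \<beta>T\<tau>) - x\<^sup>(\<^sup>n\<^sup>)(t\<^sub>0)\<close>. Written as \<open>\<beta>T\<tau>\<close> times a difference quotient, the bias
  divided by \<open>C\<^sub>\<beta>\<^sub>T\<close> is a mean of difference quotients against \<open>\<tau>\<^sup>\<kappa>\<^sup>+\<^sup>n\<^sup>+\<^sup>1 (1-\<tau>)\<^sup>\<mu>\<^sup>+\<^sup>n\<close>,
  since \<open>B(\<kappa>+n+2, \<mu>+n+1) = (\<kappa>+n+1)/(\<mu>+\<kappa>+2n+2) B(\<kappa>+n+1, \<mu>+n+1)\<close>; by the mean value
  theorem every quotient lies between the infimum and the supremum of \<open>x\<^sup>(\<^sup>n\<^sup>+\<^sup>1\<^sup>)\<close> on the window.\<close>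

lemma has_real_derivative_Leibniz_sum:
  fixes u v :: "nat \<Rightarrow> real \<Rightarrow> real"
  assumes du: "\<And>s. (u s has_real_derivative u (Suc s) t) (at t)"
    and dv: "\<And>r. (v r has_real_derivative v (Suc r) t) (at t)"
  shows "((\<lambda>t. \<Sum>s\<le>j. real (j choose s) * u s t * v (j - s) t) has_real_derivative
           (\<Sum>s\<le>Suc j. real (Suc j choose s) * u s t * v (Suc j - s) t)) (at t)"
proof -
  have "((\<lambda>t. \<Sum>s\<le>j. real (j choose s) * u s t * v (j - s) t) has_real_derivative
     (\<Sum>s\<le>j. real (j choose s) * u (Suc s) t * v (j - s) t)
     + (\<Sum>s\<le>j. real (j choose s) * u s t * v (Suc (j - s)) t)) (at t)"
    unfolding sum.distrib[symmetric]
    by (intro DERIV_sum) (auto intro!: derivative_eq_intros du dv simp: algebra_simps)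
  also have "(\<Sum>s\<le>j. real (j choose s) * u s t * v (Suc (j - s)) t)
      = u 0 t * v (Suc j) t + (\<Sum>s\<le>j. real (j choose Suc s) * u (Suc s) t * v (j - s) t)"
  proof -
    have "(\<Sum>s\<le>j. real (j choose s) * u s t * v (Suc (j - s)) t)
        = (\<Sum>s\<le>Suc j. real (j choose s) * u s t * v (Suc j - s) t)"
      by (simp add: Suc_diff_le)
    also have "\<dots> = u 0 t * v (Suc j) t + (\<Sum>s\<le>j. real (j choose Suc s) * u (Suc s) t * v (j - s) t)"
      by (subst sum.atMost_Suc_shift) simp
    finally show ?thesis .
  qed
  also have "(\<Sum>s\<le>j. real (j choose s) * u (Suc s) t * v (j - s) t) + \<dots>
      = (\<Sum>s\<le>Suc j. real (Suc j choose s) * u s t * v (Suc j - s) t)"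
    by (subst sum.atMost_Suc_shift) (simp add: sum.distrib algebra_simps)
  finally show ?thesis .
qed

definition falling_fact :: "real \<Rightarrow> nat \<Rightarrow> real" where
  "falling_fact a s = (\<Prod>i<s. a - real i)"

lemma falling_fact_Suc: "falling_fact a (Suc s) = falling_fact a s * (a - real s)"
  by (simp add: falling_fact_def)

lemma falling_fact_eq_gchoose: "falling_fact a s = (a gchoose s) * fact s"
  by (simp add: falling_fact_def gbinomial_mult_fact' atLeast0LessThan)

text \<open>The \<open>j\<close>-th derivative of \<open>\<tau> powr A * (1 - \<tau>) powr B\<close> on \<open>]0,1[\<close>, by Leibniz's rule.\<close>
definition beta_kernel_deriv :: "real \<Rightarrow> real \<Rightarrow> nat \<Rightarrow> real \<Rightarrow> real" where
  "beta_kernel_deriv A B j \<tau> =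
     (\<Sum>s\<le>j. real (j choose s) * (falling_fact A s * \<tau> powr (A - real s))
        * (falling_fact B (j - s) * (-1) ^ (j - s) * (1 - \<tau>) powr (B - real (j - s))))"

lemma beta_kernel_deriv_0: "beta_kernel_deriv A B 0 \<tau> = \<tau> powr A * (1 - \<tau>) powr B"
  by (simp add: beta_kernel_deriv_def falling_fact_def)

lemma has_real_derivative_beta_kernel_deriv:
  assumes "0 < \<tau>" "\<tau> < 1"
  shows "(beta_kernel_deriv A B j has_real_derivative beta_kernel_deriv A B (Suc j) \<tau>) (at \<tau>)"
proof -
  have "((\<lambda>\<tau>. falling_fact A s * \<tau> powr (A - real s)) has_real_derivative
          falling_fact A (Suc s) * \<tau> powr (A - real (Suc s))) (at \<tau>)" for s
    unfolding falling_fact_Suc using assms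
    by (auto intro!: derivative_eq_intros simp: algebra_simps diff_diff_add)
  moreover have "((\<lambda>\<tau>. falling_fact B r * (-1) ^ r * (1 - \<tau>) powr (B - real r)) has_real_derivative
          falling_fact B (Suc r) * (-1) ^ Suc r * (1 - \<tau>) powr (B - real (Suc r))) (at \<tau>)" for r
    unfolding falling_fact_Suc using assms
    by (auto intro!: derivative_eq_intros simp: algebra_simps diff_diff_add)
  ultimately show ?thesis
    unfolding beta_kernel_deriv_def[abs_def] by (rule has_real_derivative_Leibniz_sum)
qed

lemma continuous_on_beta_kernel_deriv:
  assumes "real j < A" "real j < B"
  shows "continuous_on {0..1} (beta_kernel_deriv A B j)"
  unfolding beta_kernel_deriv_def[abs_def] using assms
  by (intro continuous_intros continuous_on_powr') auto

lemma beta_kernel_deriv_endpoints: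
  assumes "real j < A" "real j < B"
  shows "beta_kernel_deriv A B j 0 = 0" "beta_kernel_deriv A B j 1 = 0"
  unfolding beta_kernel_deriv_def using assms by auto

lemma beta_kernel_deriv_summand:
  assumes "0 < \<tau>" "\<tau> < 1" "s \<le> n"
  shows "real (n choose s) * (falling_fact (\<kappa> + real n) s * \<tau> powr (\<kappa> + real n - real s))
           * (falling_fact (\<mu> + real n) (n - s) * (-1) ^ (n - s) * (1 - \<tau>) powr (\<mu> + real n - real (n - s)))
    = (-1) ^ n * fact n * (\<tau> powr \<kappa> * (1 - \<tau>) powr \<mu>) *
      (((real n + \<mu>) gchoose (n - s)) * ((real n + \<kappa>) gchoose s) * (\<tau> - 1) ^ s * \<tau> ^ (n - s))"
proof -
  have left: "\<tau> powr (\<kappa> + real n - real s) = \<tau> powr \<kappa> * \<tau> ^ (n - s)"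
  proof -
    have "\<kappa> + real n - real s = \<kappa> + real (n - s)"
      using assms(3) by (simp add: of_nat_diff)
    then show ?thesis
      using assms(1) by (simp only: powr_add powr_realpow)
  qed
  have right: "(1 - \<tau>) powr (\<mu> + real n - real (n - s)) = (1 - \<tau>) powr \<mu> * (1 - \<tau>) ^ s"
  proof -
    have "\<mu> + real n - real (n - s) = \<mu> + real s"
      using assms(3) by (simp add: of_nat_diff)
    then show ?thesis
      using assms(2) by (simp only: powr_add powr_realpow diff_gt_0_iff_gt)
  qed
  have binomial: "real (n choose s) * fact s * fact (n - s) = fact n"
  proof -
    have "real (fact s * fact (n - s) * (n choose s)) = real (fact n)"
      using binomial_fact_lemma[OF assms(3)] by simp
    then show ?thesis by (simp only: of_nat_mult of_nat_fact mult_ac)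
  qed
  have sign: "(-1::real) ^ (n - s) * (1 - \<tau>) ^ s = (-1) ^ n * (\<tau> - 1) ^ s"
  proof -
    have "(1 - \<tau>) ^ s = (-1) ^ s * (\<tau> - 1) ^ s" by (simp add: power_mult_distrib[symmetric])
    moreover have "(-1::real) ^ (n - s) * (-1) ^ s = (-1) ^ n"
      using assms(3) by (simp add: power_add[symmetric])
    ultimately show ?thesis by (metis mult.assoc)
  qed
  have "real (n choose s) * (falling_fact (\<kappa> + real n) s * \<tau> powr (\<kappa> + real n - real s))
           * (falling_fact (\<mu> + real n) (n - s) * (-1) ^ (n - s) * (1 - \<tau>) powr (\<mu> + real n - real (n - s)))
     = (real (n choose s) * fact s * fact (n - s)) * ((-1::real) ^ (n - s) * (1 - \<tau>) ^ s) *
       (\<tau> powr \<kappa> * (1 - \<tau>) powr \<mu>) *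
       (((real n + \<mu>) gchoose (n - s)) * ((real n + \<kappa>) gchoose s) * \<tau> ^ (n - s))"
    unfolding falling_fact_eq_gchoose left right by (simp add: algebra_simps)
  also have "\<dots> = (-1) ^ n * fact n * (\<tau> powr \<kappa> * (1 - \<tau>) powr \<mu>) *
      (((real n + \<mu>) gchoose (n - s)) * ((real n + \<kappa>) gchoose s) * (\<tau> - 1) ^ s * \<tau> ^ (n - s))"
    unfolding binomial sign by (simp add: algebra_simps)
  finally show ?thesis .
qed

text \<open>Rodrigues' formula for the Jacobi polynomials on \<open>[0,1]\<close>.\<close>
lemma beta_kernel_deriv_eq_jacobi:
  assumes "0 < \<tau>" "\<tau> < 1"
  shows "beta_kernel_deriv (\<kappa> + real n) (\<mu> + real n) n \<tau>
           = (-1) ^ n * fact n * (jacobi_weight \<mu> \<kappa> \<tau> * jacobi_poly n \<mu> \<kappa> \<tau>)"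
proof -
  have jacobi_poly_rev: "jacobi_poly n \<mu> \<kappa> \<tau> = (\<Sum>s\<le>n. ((real n + \<mu>) gchoose (n - s)) * ((real n + \<kappa>) gchoose s)
          * (\<tau> - 1) ^ s * \<tau> ^ (n - s))"
    unfolding jacobi_poly_def atLeast0AtMost[symmetric]
    by (subst sum.atLeastAtMost_rev) (auto intro!: sum.cong)
  show ?thesis
    unfolding beta_kernel_deriv_def jacobi_weight_def jacobi_poly_rev sum_distrib_left
    using beta_kernel_deriv_summand[OF assms] by (intro sum.cong refl) (simp add: mult_ac)
qed

lemma has_integral_repeated_parts:
  fixes g f :: "nat \<Rightarrow> real \<Rightarrow> real"
  assumes dg: "\<And>j \<tau>. j < n \<Longrightarrow> \<tau> \<in> {0<..<1} \<Longrightarrow> (g j has_real_derivative g (Suc j) \<tau>) (at \<tau>)"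
    and cg: "\<And>j. j < n \<Longrightarrow> continuous_on {0..1} (g j)"
    and g0: "\<And>j. j < n \<Longrightarrow> g j 0 = 0" and g1: "\<And>j. j < n \<Longrightarrow> g j 1 = 0"
    and df: "\<And>k \<tau>. k < n \<Longrightarrow> \<tau> \<in> {0<..<1} \<Longrightarrow> (f k has_real_derivative f (Suc k) \<tau>) (at \<tau>)"
    and cf: "\<And>k. k < n \<Longrightarrow> continuous_on {0..1} (f k)"
    and int: "((\<lambda>\<tau>. g 0 \<tau> * f n \<tau>) has_integral J) {0..1}"
    and "j \<le> n"
  shows "((\<lambda>\<tau>. g j \<tau> * f (n - j) \<tau>) has_integral (-1) ^ j * J) {0..1}"
  using \<open>j \<le> n\<close>
proof (induction j)
  case 0
  then show ?case using int by simp
next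
  case (Suc j)
  then have j: "j < n" "Suc (n - Suc j) = n - j" by auto
  let ?F = "\<lambda>\<tau>. g j \<tau> * f (n - Suc j) \<tau>"
  have "(?F has_vector_derivative g (Suc j) \<tau> * f (n - Suc j) \<tau> + g j \<tau> * f (n - j) \<tau>) (at \<tau>)"
    if "\<tau> \<in> {0<..<1}" for \<tau>
    using DERIV_mult[OF dg[OF j(1) that] df[of "n - Suc j", OF _ that]] j
    by (simp add: has_real_derivative_iff_has_vector_derivative[symmetric] algebra_simps)
  then have "((\<lambda>\<tau>. g (Suc j) \<tau> * f (n - Suc j) \<tau> + g j \<tau> * f (n - j) \<tau>) has_integral ?F 1 - ?F 0) {0..1}"
    using cg[OF j(1)] cf[of "n - Suc j"] j
    by (intro fundamental_theorem_of_calculus_interior continuous_intros) auto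
  with g0[OF j(1)] g1[OF j(1)]
  have "((\<lambda>\<tau>. g (Suc j) \<tau> * f (n - Suc j) \<tau> + g j \<tau> * f (n - j) \<tau>) has_integral 0) {0..1}"
    by simp
  from has_integral_diff[OF this Suc.IH] Suc.prems show ?case by simp
qed

lemma integrable_beta_weight_mult:
  fixes A B :: real
  assumes "A > -1" "B > -1" "continuous_on {0..1} \<phi>"
  shows "(\<lambda>\<tau>. \<tau> powr A * (1 - \<tau>) powr B * \<phi> \<tau>) integrable_on {0..1}"
proof -
  have "((\<lambda>\<tau>. \<tau> powr (A + 1 - 1) * (1 - \<tau>) powr (B + 1 - 1)) has_integral Beta (A + 1) (B + 1)) {0..1}"
    using assms by (intro has_integral_Beta_real) auto
  then have weight: "(\<lambda>\<tau>. \<tau> powr A * (1 - \<tau>) powr B) absolutely_integrable_on {0..1}"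
    by (intro nonnegative_absolutely_integrable_1) auto
  have "(\<lambda>\<tau>. \<phi> \<tau> * (\<tau> powr A * (1 - \<tau>) powr B)) absolutely_integrable_on {0..1}"
  proof (rule absolutely_integrable_bounded_measurable_product_real[OF _ _ _ weight])
    show "\<phi> \<in> borel_measurable (lebesgue_on {0..1})"
      using assms(3) by (rule continuous_imp_measurable_on_sets_lebesgue) auto
    show "bounded (\<phi> ` {0..1})"
      using assms(3) by (intro compact_imp_bounded compact_continuous_image) auto
  qed simp
  then show ?thesis
    by (simp add: absolutely_integrable_on_def mult.commute)
qed

lemma has_integral_Beta_moment:
  fixes a b :: real
  assumes "a > 0" "b > 0"
  shows "((\<lambda>t. t * (t powr (a - 1) * (1 - t) powr (b - 1))) has_integral a / (a + b) * Beta a b) {0..1}"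
proof -
  have "(a + b) * Beta (a + 1) b = a * Beta a b"
    using assms by (intro Beta_plus1_left) (auto elim!: nonpos_Ints_cases)
  then have "Beta (a + 1) b = a / (a + b) * Beta a b"
    using assms by (simp add: field_simps)
  with has_integral_Beta_real[of "a + 1" b] assms
  have "((\<lambda>t. t powr (a + 1 - 1) * (1 - t) powr (b - 1)) has_integral a / (a + b) * Beta a b) {0..1}"
    by simp
  then show ?thesis
  proof (rule has_integral_eq[rotated])
    fix t :: real assume "t \<in> {0..1}"
    then have "t powr (a + 1 - 1) = t * t powr (a - 1)"
      using assms by (cases "t = 0") (auto simp: powr_mult_base)
    then show "t powr (a + 1 - 1) * (1 - t) powr (b - 1) = t * (t powr (a - 1) * (1 - t) powr (b - 1))"
      by simp
  qed
qed

lemma has_integral_weighted_mean_bounds: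
  fixes g q :: "'a::euclidean_space \<Rightarrow> real"
  assumes "(g has_integral G) S" "((\<lambda>t. g t * q t) has_integral Q) S" "G > 0"
    and "\<And>t. t \<in> S \<Longrightarrow> g t \<ge> 0"
    and "\<And>t. t \<in> S \<Longrightarrow> g t \<noteq> 0 \<Longrightarrow> m \<le> q t \<and> q t \<le> M"
  shows "m \<le> Q / G \<and> Q / G \<le> M"
proof -
  have "m * g t \<le> g t * q t \<and> g t * q t \<le> M * g t" if "t \<in> S" for t
    using assms(4,5)[OF that] by (cases "g t = 0") (auto simp: mult.commute intro: mult_left_mono)
  then have "m * G \<le> Q" "Q \<le> M * G"
    by (auto intro: has_integral_le[OF has_integral_mult_right[OF assms(1)] assms(2)]
                    has_integral_le[OF assms(2) has_integral_mult_right[OF assms(1)]])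
  then show ?thesis
    using assms(3) by (simp add: field_simps)
qed

lemma difference_quotient_bounds:
  fixes f f' :: "real \<Rightarrow> real"
  assumes "a \<noteq> b"
    and "\<And>y. y \<in> closed_segment a b \<Longrightarrow> (f has_real_derivative f' y) (at y)"
    and "\<And>y. y \<in> open_segment a b \<Longrightarrow> m \<le> f' y \<and> f' y \<le> M"
  shows "m \<le> (f b - f a) / (b - a) \<and> (f b - f a) / (b - a) \<le> M"
proof -
  obtain z where "z \<in> open_segment a b" "(f b - f a) / (b - a) = f' z"
  proof (cases "a < b")
    case True
    with assms(2) obtain z where "a < z" "z < b" "f b - f a = (b - a) * f' z"
      using MVT2[of a b f f'] by (auto simp: closed_segment_eq_real_ivl)
    with True that[of z] show ?thesis by (simp add: open_segment_eq_real_ivl)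
  next
    case False
    with assms(1) have "b < a" by simp
    with assms(2) obtain z where "b < z" "z < a" "f a - f b = (a - b) * f' z"
      using MVT2[of b a f f'] by (auto simp: closed_segment_eq_real_ivl)
    with \<open>b < a\<close> that[of z] show ?thesis
      by (simp add: open_segment_eq_real_ivl field_simps)
  qed
  with assms(3) show ?thesis by simp
qed

lemma Beta_pos_real:
  fixes a b :: real
  shows "a > 0 \<Longrightarrow> b > 0 \<Longrightarrow> Beta a b > 0"
  by (simp add: Beta_def)

lemma Ck_on_continuous_on_deriv:
  assumes "Ck_on k I f" "j \<le> k"
  shows "continuous_on I ((deriv ^^ j) f)"
proof (cases "j = k")
  case False
  with assms have "\<forall>t\<in>I. isCont ((deriv ^^ j) f) t"
    unfolding Ck_on_def by (meson DERIV_isCont le_neq_implies_less)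
  then show ?thesis
    by (rule continuous_at_imp_continuous_on)
qed (use assms in \<open>simp add: Ck_on_def\<close>)

lemma Ck_on_Suc_imp_Ck_on: "Ck_on (Suc k) I f \<Longrightarrow> Ck_on k I f"
  using Ck_on_continuous_on_deriv[of "Suc k" I f k] by (simp add: Ck_on_def)

lemma add_mult_in_closed_segment: "\<tau> \<in> {0..1} \<Longrightarrow> t0 + h * \<tau> \<in> closed_segment t0 (t0 + h :: real)"
  unfolding in_segment by (intro exI[of _ \<tau>]) (auto simp: algebra_simps)

lemma has_integral_jacobi_estimator:
  assumes Ck: "Ck_on n I x" and seg: "closed_segment t0 (t0 + h) \<subseteq> I" and h: "h \<noteq> 0"
    and \<kappa>: "\<kappa> > -1" and \<mu>: "\<mu> > -1"
  shows "((\<lambda>\<tau>. \<tau> powr (\<kappa> + real n) * (1 - \<tau>) powr (\<mu> + real n) * (deriv ^^ n) x (t0 + h * \<tau>))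
           has_integral Beta (\<kappa> + real n + 1) (\<mu> + real n + 1) * jacobi_estimator n \<mu> \<kappa> h x t0) {0..1}"
proof -
  define B where "B = Beta (\<kappa> + real n + 1) (\<mu> + real n + 1)"
  define g where "g = beta_kernel_deriv (\<kappa> + real n) (\<mu> + real n)"
  define f where "f k \<tau> = h ^ k * (deriv ^^ k) x (t0 + h * \<tau>)" for k \<tau>
  have in_I: "t0 + h * \<tau> \<in> I" if "\<tau> \<in> {0..1}" for \<tau>
    using seg add_mult_in_closed_segment[OF that] by blast
  have df: "(f k has_real_derivative f (Suc k) \<tau>) (at \<tau>)" if "k < n" "\<tau> \<in> {0..1}" for k \<tau>
  proof -
    have "((deriv ^^ k) x has_real_derivative (deriv ^^ Suc k) x (t0 + h * \<tau>)) (at (t0 + h * \<tau>))"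
      using Ck that in_I unfolding Ck_on_def by blast
    then have "((\<lambda>\<tau>. (deriv ^^ k) x (t0 + h * \<tau>)) has_real_derivative
                 (deriv ^^ Suc k) x (t0 + h * \<tau>) * h) (at \<tau>)"
      by (rule DERIV_chain2) (auto intro!: derivative_eq_intros)
    from DERIV_cmult[OF this, of "h ^ k"] show ?thesis
      unfolding f_def by (simp add: algebra_simps)
  qed
  have cD: "continuous_on {0..1} (\<lambda>\<tau>. (deriv ^^ k) x (t0 + h * \<tau>))" if "k \<le> n" for k
    using in_I
    by (intro continuous_on_compose2[OF Ck_on_continuous_on_deriv[OF Ck that]] continuous_intros) auto
  have cf: "continuous_on {0..1} (f k)" if "k \<le> n" for k
    unfolding f_def using cD[OF that] by (intro continuous_intros)
  define W where "W = integral {0..1} (\<lambda>\<tau>. \<tau> powr (\<kappa> + real n) * (1 - \<tau>) powr (\<mu> + real n)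
                                              * (deriv ^^ n) x (t0 + h * \<tau>))"
  have W: "((\<lambda>\<tau>. \<tau> powr (\<kappa> + real n) * (1 - \<tau>) powr (\<mu> + real n) * (deriv ^^ n) x (t0 + h * \<tau>))
             has_integral W) {0..1}"
    unfolding W_def using \<kappa> \<mu> cD[OF order.refl]
    by (intro integrable_integral integrable_beta_weight_mult) auto
  have "((\<lambda>\<tau>. g 0 \<tau> * f n \<tau>) has_integral h ^ n * W) {0..1}"
    using has_integral_mult_right[OF W, of "h ^ n"]
    by (simp add: g_def f_def beta_kernel_deriv_0 mult_ac)
  then have "((\<lambda>\<tau>. g n \<tau> * f (n - n) \<tau>) has_integral (-1) ^ n * (h ^ n * W)) {0..1}"
  proof (rule has_integral_repeated_parts[where g = g and f = f, rotated -2, OF _ order.refl])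
    fix j assume j: "j < n"
    with \<kappa> \<mu> have "real j < \<kappa> + real n" "real j < \<mu> + real n" by auto
    then show "continuous_on {0..1} (g j)" "g j 0 = 0" "g j 1 = 0"
      unfolding g_def by (auto intro: continuous_on_beta_kernel_deriv beta_kernel_deriv_endpoints)
  qed (auto simp: g_def intro: df cf has_real_derivative_beta_kernel_deriv)
  from has_integral_mult_right[OF this, of "(-1) ^ n / fact n"]
  have "((\<lambda>\<tau>. (-1) ^ n / fact n * (g n \<tau> * f (n - n) \<tau>)) has_integral
          (-1) ^ n / fact n * ((-1) ^ n * (h ^ n * W))) {0..1}" .
  also have "(-1) ^ n / fact n * ((-1) ^ n * (h ^ n * W)) = h ^ n * W / (fact n :: real)"
    by (simp flip: power_add add: power_even_eq[symmetric] mult_2[symmetric])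
  finally have "((\<lambda>\<tau>. jacobi_weight \<mu> \<kappa> \<tau> * jacobi_poly n \<mu> \<kappa> \<tau> * x (t0 + h * \<tau>))
               has_integral h ^ n * W / fact n) {0..1}"
  proof (rule has_integral_spike_finite[of "{0, 1}", rotated 2])
    fix \<tau> :: real assume "\<tau> \<in> {0..1} - {0, 1}"
    then show "jacobi_weight \<mu> \<kappa> \<tau> * jacobi_poly n \<mu> \<kappa> \<tau> * x (t0 + h * \<tau>)
             = (-1) ^ n / fact n * (g n \<tau> * f (n - n) \<tau>)"
      by (simp add: g_def f_def beta_kernel_deriv_eq_jacobi power_mult_distrib[symmetric])
  qed simp
  then have "jacobi_estimator n \<mu> \<kappa> h x t0 = W / B"
    unfolding jacobi_estimator_def B_def[symmetric] using h by (simp add: integral_unique)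
  moreover have "B > 0"
    unfolding B_def using \<kappa> \<mu> by (simp add: Beta_pos_real)
  ultimately show ?thesis
    using W by (simp add: B_def)
qed

lemma has_integral_jacobi_bias_error:
  assumes "Ck_on n I x" "closed_segment t0 (t0 + h) \<subseteq> I" "h \<noteq> 0" "\<kappa> > -1" "\<mu> > -1"
  shows "((\<lambda>\<tau>. \<tau> powr (\<kappa> + real n) * (1 - \<tau>) powr (\<mu> + real n)
             * ((deriv ^^ n) x (t0 + h * \<tau>) - (deriv ^^ n) x t0))
           has_integral Beta (\<kappa> + real n + 1) (\<mu> + real n + 1) * jacobi_bias_error n \<mu> \<kappa> h x t0) {0..1}"
proof -
  have "((\<lambda>\<tau>. \<tau> powr (\<kappa> + real n + 1 - 1) * (1 - \<tau>) powr (\<mu> + real n + 1 - 1))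
          has_integral Beta (\<kappa> + real n + 1) (\<mu> + real n + 1)) {0..1}"
    using assms(4,5) by (intro has_integral_Beta_real) auto
  from has_integral_diff[OF has_integral_jacobi_estimator[OF assms]
         has_integral_mult_left[OF this, of "(deriv ^^ n) x t0"]]
  show ?thesis
    by (simp add: jacobi_bias_error_def algebra_simps)
qed

lemma jacobi_bias_error_div_jacobi_C_bounds:
  fixes x :: "real \<Rightarrow> real"
  assumes Ck: "Ck_on (Suc n) I x" and seg: "closed_segment t0 (t0 + h) \<subseteq> I" and h: "h \<noteq> 0"
    and \<kappa>: "\<kappa> > -1" and \<mu>: "\<mu> > -1"
  defines "m \<equiv> INF \<theta>\<in>open_segment t0 (t0 + h). (deriv ^^ Suc n) x \<theta>"
    and "M \<equiv> SUP \<theta>\<in>open_segment t0 (t0 + h). (deriv ^^ Suc n) x \<theta>"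
  shows "m \<le> jacobi_bias_error n \<mu> \<kappa> h x t0 / jacobi_C n \<mu> \<kappa> h
       \<and> jacobi_bias_error n \<mu> \<kappa> h x t0 / jacobi_C n \<mu> \<kappa> h \<le> M"
proof -
  let ?D = "\<lambda>k. (deriv ^^ k) x" and ?W = "open_segment t0 (t0 + h)"
  define B where "B = Beta (\<kappa> + real n + 1) (\<mu> + real n + 1)"
  define c where "c = (\<kappa> + real n + 1) / (\<kappa> + \<mu> + 2 * real n + 2)"
  define w where "w \<tau> = \<tau> powr (\<kappa> + real n) * (1 - \<tau>) powr (\<mu> + real n)" for \<tau>
  define q where "q \<tau> = (?D n (t0 + h * \<tau>) - ?D n t0) / (h * \<tau>)" for \<tau>
  have "continuous_on (closed_segment t0 (t0 + h)) (?D (Suc n))"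
    using continuous_on_subset[OF Ck_on_continuous_on_deriv[OF Ck order.refl] seg] .
  then have "bounded (?D (Suc n) ` closed_segment t0 (t0 + h))"
    by (intro compact_imp_bounded compact_continuous_image compact_segment)
  then have W_bounded: "bounded (?D (Suc n) ` ?W)"
    by (rule bounded_subset) (intro image_mono segment_open_subset_closed)
  have q_bounds: "m \<le> q \<tau> \<and> q \<tau> \<le> M" if "\<tau> \<in> {0..1}" "\<tau> * w \<tau> \<noteq> 0" for \<tau>
  proof -
    have end_in: "t0 + h * \<tau> \<in> closed_segment t0 (t0 + h)"
      using add_mult_in_closed_segment[OF that(1)] .
    then have "closed_segment t0 (t0 + h * \<tau>) \<subseteq> I"
      using seg by (meson ends_in_segment(1) order_trans subset_closed_segment)
    then have "(?D n has_real_derivative ?D (Suc n) y) (at y)"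
      if "y \<in> closed_segment t0 (t0 + h * \<tau>)" for y
      using Ck that unfolding Ck_on_def by blast
    moreover have "m \<le> ?D (Suc n) z \<and> ?D (Suc n) z \<le> M" if "z \<in> open_segment t0 (t0 + h * \<tau>)" for z
    proof -
      from that end_in have "z \<in> ?W"
        using subset_open_segment by blast
      then show ?thesis
        unfolding m_def M_def
        using cINF_lower[OF bounded_imp_bdd_below[OF W_bounded]]
          cSUP_upper[OF _ bounded_imp_bdd_above[OF W_bounded]] by blast
    qed
    moreover have "h * \<tau> \<noteq> 0"
      using h that(2) by auto
    ultimately show ?thesis
      using difference_quotient_bounds[of t0 "t0 + h * \<tau>" "?D n" "?D (Suc n)" m M]
      unfolding q_def by simp
  qed
  have "((\<lambda>\<tau>. \<tau> * w \<tau>) has_integral c * B) {0..1}"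
    using has_integral_Beta_moment[of "\<kappa> + real n + 1" "\<mu> + real n + 1"] \<kappa> \<mu>
    by (simp add: w_def B_def c_def algebra_simps)
  moreover have "((\<lambda>\<tau>. \<tau> * w \<tau> * q \<tau>) has_integral B * jacobi_bias_error n \<mu> \<kappa> h x t0 / h) {0..1}"
  proof -
    \<comment> \<open>at \<open>\<tau> = 0\<close> both sides vanish, \<open>q 0\<close> being a division by zero\<close>
    have "w \<tau> * (?D n (t0 + h * \<tau>) - ?D n t0) / h = \<tau> * w \<tau> * q \<tau>" for \<tau>
      using h by (cases "\<tau> = 0") (simp_all add: q_def)
    then show ?thesis
      using has_integral_divide[OF has_integral_jacobi_bias_error[OF Ck_on_Suc_imp_Ck_on[OF Ck] seg h \<kappa> \<mu>], of h]
      unfolding w_def B_def by simp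
  qed
  moreover have "B > 0" "c > 0"
    unfolding B_def c_def using \<kappa> \<mu> by (simp_all add: Beta_pos_real)
  moreover have "\<tau> * w \<tau> \<ge> 0" if "\<tau> \<in> {0..1}" for \<tau>
    using that by (simp add: w_def)
  ultimately have "m \<le> (B * jacobi_bias_error n \<mu> \<kappa> h x t0 / h) / (c * B)
                 \<and> (B * jacobi_bias_error n \<mu> \<kappa> h x t0 / h) / (c * B) \<le> M"
    using q_bounds by (intro has_integral_weighted_mean_bounds) auto
  moreover have "(B * jacobi_bias_error n \<mu> \<kappa> h x t0 / h) / (c * B)
               = jacobi_bias_error n \<mu> \<kappa> h x t0 / jacobi_C n \<mu> \<kappa> h"
    using \<open>B > 0\<close> by (simp add: jacobi_C_def c_def)
  ultimately show ?thesis by simp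
qed

theorem proposition2:
  fixes I :: "real set" and n :: nat and x :: "real \<Rightarrow> real"
    and \<kappa> \<mu> t0 T :: real
  assumes "open I" and "is_interval I" and "I \<noteq> {}"
    and "Ck_on (Suc n) I x"
    and "\<kappa> > -1" and "\<mu> > -1"
    and "t0 \<in> I" and "T > 0"
  shows "(t0 + T \<in> I \<longrightarrow>
            jacobi_C n \<mu> \<kappa> T * (INF \<theta>\<in>{t0<..<t0+T}. (deriv ^^ Suc n) x \<theta>)
              \<le> jacobi_bias_error n \<mu> \<kappa> T x t0
          \<and> jacobi_bias_error n \<mu> \<kappa> T x t0
              \<le> jacobi_C n \<mu> \<kappa> T * (SUP \<theta>\<in>{t0<..<t0+T}. (deriv ^^ Suc n) x \<theta>))
       \<and> (t0 - T \<in> I \<longrightarrow>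
            jacobi_C n \<mu> \<kappa> (-T) * (SUP \<theta>\<in>{t0-T<..<t0}. (deriv ^^ Suc n) x \<theta>)
              \<le> jacobi_bias_error n \<mu> \<kappa> (-T) x t0
          \<and> jacobi_bias_error n \<mu> \<kappa> (-T) x t0
              \<le> jacobi_C n \<mu> \<kappa> (-T) * (INF \<theta>\<in>{t0-T<..<t0}. (deriv ^^ Suc n) x \<theta>))"
proof -
  have segment: "closed_segment t0 (t0 + h) \<subseteq> I" if "t0 + h \<in> I" for h
    using assms(2,7) that by (simp add: closed_segment_subset is_interval_convex)
  have C_pos: "jacobi_C n \<mu> \<kappa> T > 0" and C_neg: "jacobi_C n \<mu> \<kappa> (-T) < 0"
    using assms(5,6,8) by (simp_all add: jacobi_C_def)
  show ?thesis
  proof (intro conjI impI)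
    assume "t0 + T \<in> I"
    from jacobi_bias_error_div_jacobi_C_bounds[OF assms(4) segment[OF this] _ assms(5,6)] assms(8) C_pos
    show "jacobi_C n \<mu> \<kappa> T * (INF \<theta>\<in>{t0<..<t0+T}. (deriv ^^ Suc n) x \<theta>) \<le> jacobi_bias_error n \<mu> \<kappa> T x t0"
      "jacobi_bias_error n \<mu> \<kappa> T x t0 \<le> jacobi_C n \<mu> \<kappa> T * (SUP \<theta>\<in>{t0<..<t0+T}. (deriv ^^ Suc n) x \<theta>)"
      by (simp_all add: open_segment_eq_real_ivl pos_le_divide_eq pos_divide_le_eq mult.commute)
  next
    assume "t0 - T \<in> I"
    then have "t0 + -T \<in> I" by simp
    from jacobi_bias_error_div_jacobi_C_bounds[OF assms(4) segment[OF this] _ assms(5,6)] assms(8) C_neg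
    show "jacobi_C n \<mu> \<kappa> (-T) * (SUP \<theta>\<in>{t0-T<..<t0}. (deriv ^^ Suc n) x \<theta>) \<le> jacobi_bias_error n \<mu> \<kappa> (-T) x t0"
      "jacobi_bias_error n \<mu> \<kappa> (-T) x t0 \<le> jacobi_C n \<mu> \<kappa> (-T) * (INF \<theta>\<in>{t0-T<..<t0}. (deriv ^^ Suc n) x \<theta>)"
      by (simp_all add: open_segment_eq_real_ivl neg_le_divide_eq neg_divide_le_eq mult.commute)
  qed
qed

end
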